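(* Let $p>0$, let $u$ be a weight on $\mathbb R$ satisfying the doubling property $u(2I)\le Cu(I)$ for all intervals $I$, and let $w$ be a weight on $(0,\infty)$ with $w\in\Delta_2$. Then there is a constant $C'>0$ such that for every well-separated finite family of intervals $\{I_i\}_i$ and every choice of integers $j_i\in[-50,50]$, $$\frac1{C'}W^{1/p}\Big(u\big(\textstyle\bigcup_iI_{i,j_i}\big)\Big)\le W^{1/p}\Big(u\big(\textstyle\bigcup_iI_i\big)\Big)\le C'\,W^{1/p}\Big(u\big(\textstyle\bigcup_iI_{i,j_i}\big)\Big).$$
   Context: A weight $u$ on $\mathbb R$ is locally integrable with $u>0$ a.e.; $u(E)=\int_Eu$; $2I$ is the interval with the same center as $I$ and twice the length. A weight $w$ on $(0,\infty)$ is nonnegative locally integrable, $W(t)=\int_0^tw$; $w\in\Delta_2$ means $W(2r)\le CW(r)$ for all $r>0$. For an interval $I$ and an integer $j\in[-50,50]$, $I_{j}$ denotes the interval with $|I_j|=|I|$, $I_0=I$, and for $j\ne0$, $\mathrm{dist}(I_j,I)=(|j|-1)|I|$ with $I_j$ to the left of $I$ if $j<0$ and to the right if $j>0$; thus $101I=\bigcup_{j=-50}^{50}I_j$, where $101I$ is the interval with the same center as $I$ and $101$ times the length. For a family $\{I_i\}$, $I_{i,j}$ denotes $(I_i)_j$. A finite family of intervals $\{I_i\}$ is well-separated if the intervals $101I_i$ are pairwise disjoint. *)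

theory Defs
  imports "HOL-Analysis.Analysis"
begin

definition ivl :: "real \<times> real \<Rightarrow> real set" where
  "ivl I = {fst I .. snd I}"

definition dilate :: "real \<Rightarrow> real \<times> real \<Rightarrow> real \<times> real" where
  "dilate k I = (let c = (fst I + snd I) / 2; h = (snd I - fst I) / 2
                 in (c - k * h, c + k * h))"

text \<open>I_j: translate I by j times its length.\<close>
definition shift_ivl :: "real \<times> real \<Rightarrow> int \<Rightarrow> real \<times> real" where
  "shift_ivl I j = (fst I + of_int j * (snd I - fst I), snd I + of_int j * (snd I - fst I))"

definition weight_R :: "(real \<Rightarrow> real) \<Rightarrow> bool" where
  "weight_R u \<longleftrightarrow> (\<forall>a b. set_integrable lborel {a..b} u) \<and> (AE x in lborel. u x > 0)"

definition umeas :: "(real \<Rightarrow> real) \<Rightarrow> real set \<Rightarrow> real" where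
  "umeas u E = (LINT x:E|lborel. u x)"

text \<open>A weight on (0,infinity): nonnegative, integrable on (0,t] for every t>0 (so W is finite).\<close>
definition weight_pos :: "(real \<Rightarrow> real) \<Rightarrow> bool" where
  "weight_pos w \<longleftrightarrow> (\<forall>x>0. w x \<ge> 0) \<and> (\<forall>t>0. set_integrable lborel {0<..t} w)"

definition Wfun :: "(real \<Rightarrow> real) \<Rightarrow> real \<Rightarrow> real" where
  "Wfun w t = (LINT x:{0<..t}|lborel. w x)"

definition Delta2 :: "(real \<Rightarrow> real) \<Rightarrow> bool" where
  "Delta2 w \<longleftrightarrow> (\<exists>C. \<forall>r>0. Wfun w (2 * r) \<le> C * Wfun w r)"

definition doubling :: "(real \<Rightarrow> real) \<Rightarrow> bool" where
  "doubling u \<longleftrightarrow> (\<exists>C. \<forall>a b. a < b \<longrightarrow> umeas u (ivl (dilate 2 (a, b))) \<le> C * umeas u (ivl (a, b)))"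

definition well_separated :: "'i set \<Rightarrow> ('i \<Rightarrow> real \<times> real) \<Rightarrow> bool" where
  "well_separated S I \<longleftrightarrow> finite S \<and>
     (\<forall>i\<in>S. \<forall>k\<in>S. i \<noteq> k \<longrightarrow> ivl (dilate 101 (I i)) \<inter> ivl (dilate 101 (I k)) = {})"

end

theory Submission
  imports Defs
begin

text \<open>
  Each of I and I_j lies in the dilate 101 I of the other, so iterating the doubling
  condition makes u(I) and u(I_j) comparable with a constant depending only on u. Since
  the dilates 101 I_i are pairwise disjoint, so are the I_i and the I_{i,j_i}; hence
  u of either union is the sum of the u-masses of its pieces, and the two unions have
  comparable u-measure. Finally, the Delta_2 condition turns W(s) <= W(c t) into
  W(s) <= K W(t), and taking 1/p-th powers gives the claim.
\<close>

lemma weight_R_set_integrable: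
  assumes "weight_R u" "E \<in> sets lborel" "bounded E"
  shows "set_integrable lborel E u"
proof -
  obtain a where "E \<subseteq> cbox (-a) a" using bounded_subset_cbox_symmetric[OF assms(3)] by blast
  then show ?thesis
    using assms(1,2) set_integrable_subset unfolding weight_R_def cbox_interval by blast
qed

lemma umeas_nonneg: "weight_R u \<Longrightarrow> 0 \<le> umeas u E"
  unfolding umeas_def set_lebesgue_integral_def weight_R_def
  by (rule integral_nonneg_AE) (auto elim!: eventually_mono simp: indicator_def)

lemma umeas_mono:
  assumes "weight_R u" "E \<subseteq> F" "E \<in> sets lborel" "F \<in> sets lborel" "bounded F"
  shows "umeas u E \<le> umeas u F"
proof -
  have "set_integrable lborel E u" "set_integrable lborel F u"
    using assms bounded_subset weight_R_set_integrable by metis+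
  moreover have "AE x in lborel. indicator E x *\<^sub>R u x \<le> indicator F x *\<^sub>R u x"
    using assms(1,2) unfolding weight_R_def
    by (auto elim!: eventually_mono simp: indicator_def)
  ultimately show ?thesis
    unfolding umeas_def set_lebesgue_integral_def set_integrable_def
    by (rule integral_mono_AE)
qed

lemma umeas_UN_disjoint:
  assumes "weight_R u" "finite S" "disjoint_family_on E S"
    and "\<And>i. i \<in> S \<Longrightarrow> E i \<in> sets lborel \<and> bounded (E i)"
  shows "umeas u (\<Union>i\<in>S. E i) = (\<Sum>i\<in>S. umeas u (E i))"
proof -
  have "umeas u (\<Union>i\<in>S. E i) = integral\<^sup>L lborel (\<lambda>x. \<Sum>i\<in>S. indicator (E i) x *\<^sub>R u x)"
    unfolding umeas_def set_lebesgue_integral_def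
    by (simp add: indicator_UN_disjoint[OF assms(2,3)] sum_distrib_right)
  also have "\<dots> = (\<Sum>i\<in>S. umeas u (E i))"
    unfolding umeas_def set_lebesgue_integral_def
    using assms(1,4) weight_R_set_integrable unfolding set_integrable_def
    by (intro Bochner_Integration.integral_sum) blast
  finally show ?thesis .
qed

lemma umeas_UN_ivl_le:
  assumes "weight_R u" "finite S"
    and "disjoint_family_on (\<lambda>i. ivl (J i)) S" "disjoint_family_on (\<lambda>i. ivl (K i)) S"
    and "\<And>i. i \<in> S \<Longrightarrow> umeas u (ivl (J i)) \<le> c * umeas u (ivl (K i))"
  shows "umeas u (\<Union>i\<in>S. ivl (J i)) \<le> c * umeas u (\<Union>i\<in>S. ivl (K i))"
proof -
  have ivl: "ivl X \<in> sets lborel \<and> bounded (ivl X)" for X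
    by (simp add: ivl_def)
  show ?thesis
    using assms(5)
    by (simp add: umeas_UN_disjoint[OF assms(1,2,3) ivl] umeas_UN_disjoint[OF assms(1,2,4) ivl]
        sum_distrib_left sum_mono)
qed

lemma dilate_dilate: "dilate k (dilate l I) = dilate (k * l) I"
  by (simp add: dilate_def Let_def field_simps)

lemma dilate_1 [simp]: "dilate 1 I = I"
  by (cases I) (simp add: dilate_def Let_def field_simps)

lemma dilate_less: "fst I < snd I \<Longrightarrow> 0 < k \<Longrightarrow> fst (dilate k I) < snd (dilate k I)"
  by (simp add: dilate_def Let_def)

lemma ivl_dilate_mono:
  assumes "fst I \<le> snd I" "k \<le> l"
  shows "ivl (dilate k I) \<subseteq> ivl (dilate l I)"
proof -
  have "k * (snd I - fst I) \<le> l * (snd I - fst I)"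
    using assms by (intro mult_right_mono) auto
  then show ?thesis
    by (auto simp: ivl_def dilate_def Let_def field_simps)
qed

lemma shift_ivl_less: "fst I < snd I \<Longrightarrow> fst (shift_ivl I j) < snd (shift_ivl I j)"
  by (simp add: shift_ivl_def)

lemma shift_ivl_uminus: "shift_ivl (shift_ivl I j) (- j) = I"
  by (simp add: shift_ivl_def algebra_simps)

lemma ivl_shift_subset_dilate:
  assumes "fst I \<le> snd I" "\<bar>j\<bar> \<le> int n"
  shows "ivl (shift_ivl I j) \<subseteq> ivl (dilate (2 * n + 1) I)"
proof -
  have "\<bar>of_int j * (snd I - fst I)\<bar> \<le> n * (snd I - fst I)"
    using assms by (simp add: abs_mult mult_right_mono)
  then show ?thesis
    by (auto simp: ivl_def dilate_def shift_ivl_def Let_def field_simps abs_le_iff)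
qed

lemma ivl_subset_dilate_shift:
  assumes "fst I \<le> snd I" "\<bar>j\<bar> \<le> int n"
  shows "ivl I \<subseteq> ivl (dilate (2 * n + 1) (shift_ivl I j))"
  using ivl_shift_subset_dilate[of "shift_ivl I j" "- j" n] assms
  by (simp add: shift_ivl_uminus shift_ivl_def)

lemma doubling_ge_1:
  assumes "weight_R u" "doubling u"
  obtains D where "D \<ge> 1"
    "\<And>a b. a < b \<Longrightarrow> umeas u (ivl (dilate 2 (a, b))) \<le> D * umeas u (ivl (a, b))"
proof -
  obtain C where C: "\<And>a b. a < b \<Longrightarrow> umeas u (ivl (dilate 2 (a, b))) \<le> C * umeas u (ivl (a, b))"
    using assms(2) unfolding doubling_def by blast
  show thesis
  proof (rule that[of "max C 1"])
    fix a b :: real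
    assume "a < b"
    have "C * umeas u (ivl (a, b)) \<le> max C 1 * umeas u (ivl (a, b))"
      using umeas_nonneg[OF assms(1)] by (intro mult_right_mono) auto
    with C[OF \<open>a < b\<close>] show "umeas u (ivl (dilate 2 (a, b))) \<le> max C 1 * umeas u (ivl (a, b))"
      by linarith
  qed simp
qed

lemma umeas_dilate_power_le:
  assumes "D \<ge> 0" "\<And>a b. a < b \<Longrightarrow> umeas u (ivl (dilate 2 (a, b))) \<le> D * umeas u (ivl (a, b))"
    and "fst I < snd I"
  shows "umeas u (ivl (dilate (2 ^ k) I)) \<le> D ^ k * umeas u (ivl I)"
proof (induction k)
  case 0
  show ?case by simp
next
  case (Suc k)
  obtain a b where ab: "dilate (2 ^ k) I = (a, b)" by fastforce
  have "a < b" using dilate_less[OF assms(3), of "2 ^ k"] ab by simp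
  have "umeas u (ivl (dilate (2 ^ Suc k) I)) = umeas u (ivl (dilate 2 (a, b)))"
    using ab dilate_dilate[of 2 "2 ^ k" I] by simp
  also have "\<dots> \<le> D * umeas u (ivl (a, b))" using assms(2) \<open>a < b\<close> .
  also have "\<dots> \<le> D * (D ^ k * umeas u (ivl I))"
    using Suc ab assms(1) by (simp add: mult_left_mono)
  finally show ?case by simp
qed

lemma doubling_umeas_subset_dilate:
  assumes "weight_R u" "doubling u"
  obtains c where "\<And>J K. fst K < snd K \<Longrightarrow> ivl J \<subseteq> ivl (dilate t K) \<Longrightarrow>
    umeas u (ivl J) \<le> c * umeas u (ivl K)"
proof -
  obtain D where "D \<ge> 1" and D:
    "\<And>a b. a < b \<Longrightarrow> umeas u (ivl (dilate 2 (a, b))) \<le> D * umeas u (ivl (a, b))"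
    using doubling_ge_1[OF assms] by blast
  obtain k where "t < 2 ^ k" using real_arch_pow[of 2 t] by auto
  have "umeas u (ivl J) \<le> D ^ k * umeas u (ivl K)"
    if "fst K < snd K" "ivl J \<subseteq> ivl (dilate t K)" for J K
  proof -
    have "ivl J \<subseteq> ivl (dilate (2 ^ k) K)"
      using that ivl_dilate_mono[of K t "2 ^ k"] \<open>t < 2 ^ k\<close> by auto
    then have "umeas u (ivl J) \<le> umeas u (ivl (dilate (2 ^ k) K))"
      by (intro umeas_mono[OF assms(1)]) (auto simp: ivl_def)
    also have "\<dots> \<le> D ^ k * umeas u (ivl K)"
      using umeas_dilate_power_le[OF _ D that(1)] \<open>D \<ge> 1\<close> by simp
    finally show ?thesis .
  qed
  then show thesis by (rule that)
qed

lemma umeas_UN_shift_comparable: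
  assumes "weight_R u" "doubling u"
  obtains c where "\<And>S I j. \<forall>i\<in>S. fst (I i) < snd (I i) \<Longrightarrow> well_separated S I \<Longrightarrow>
      \<forall>i\<in>S. \<bar>j i\<bar> \<le> 50 \<Longrightarrow>
      umeas u (\<Union>i\<in>S. ivl (shift_ivl (I i) (j i))) \<le> c * umeas u (\<Union>i\<in>S. ivl (I i)) \<and>
      umeas u (\<Union>i\<in>S. ivl (I i)) \<le> c * umeas u (\<Union>i\<in>S. ivl (shift_ivl (I i) (j i)))"
proof -
  obtain c where c: "\<And>J K. fst K < snd K \<Longrightarrow> ivl J \<subseteq> ivl (dilate 101 K) \<Longrightarrow>
      umeas u (ivl J) \<le> c * umeas u (ivl K)"
    using doubling_umeas_subset_dilate[OF assms, of 101] by blast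
  have "umeas u (\<Union>i\<in>S. ivl (shift_ivl (I i) (j i))) \<le> c * umeas u (\<Union>i\<in>S. ivl (I i)) \<and>
      umeas u (\<Union>i\<in>S. ivl (I i)) \<le> c * umeas u (\<Union>i\<in>S. ivl (shift_ivl (I i) (j i)))"
    if lt: "\<forall>i\<in>S. fst (I i) < snd (I i)" and sep: "well_separated S I"
      and j: "\<forall>i\<in>S. \<bar>j i\<bar> \<le> 50" for S I j
  proof -
    have le: "fst (I i) \<le> snd (I i)" if "i \<in> S" for i
      using lt that by auto
    have shift: "ivl (shift_ivl (I i) (j i)) \<subseteq> ivl (dilate 101 (I i))"
      and unshift: "ivl (I i) \<subseteq> ivl (dilate 101 (shift_ivl (I i) (j i)))"
      and self: "ivl (I i) \<subseteq> ivl (dilate 101 (I i))" if "i \<in> S" for i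
      using ivl_shift_subset_dilate[OF le, of i "j i" 50] ivl_subset_dilate_shift[OF le, of i "j i" 50]
        ivl_dilate_mono[OF le, of i 1 101] j that by simp_all
    have "disjoint_family_on (\<lambda>i. ivl (dilate 101 (I i))) S"
      using sep unfolding well_separated_def disjoint_family_on_def by blast
    then have disj: "disjoint_family_on (\<lambda>i. ivl (I i)) S"
      "disjoint_family_on (\<lambda>i. ivl (shift_ivl (I i) (j i))) S"
      using shift self unfolding disjoint_family_on_def by blast+
    have "finite S" using sep unfolding well_separated_def by blast
    show ?thesis
      using lt shift unshift shift_ivl_less
      by (intro conjI umeas_UN_ivl_le[OF assms(1) \<open>finite S\<close>] disj c) auto
  qed
  then show thesis by (rule that)
qed

lemma Wfun_nonneg: "weight_pos w \<Longrightarrow> 0 \<le> Wfun w t"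
  unfolding Wfun_def set_lebesgue_integral_def weight_pos_def
  by (rule integral_nonneg_AE) (auto simp: indicator_def)

lemma Wfun_0 [simp]: "Wfun w 0 = 0"
  unfolding Wfun_def set_lebesgue_integral_def by simp

lemma Wfun_mono:
  assumes "weight_pos w" "0 \<le> s" "s \<le> t"
  shows "Wfun w s \<le> Wfun w t"
proof (cases "s = 0")
  case True
  then show ?thesis using Wfun_nonneg[OF assms(1)] by simp
next
  case False
  then have "set_integrable lborel {0<..s} w" "set_integrable lborel {0<..t} w"
    using assms unfolding weight_pos_def by auto
  then show ?thesis
    unfolding Wfun_def set_lebesgue_integral_def set_integrable_def
    by (rule integral_mono) (use assms in \<open>auto simp: indicator_def weight_pos_def\<close>)
qed

lemma Delta2_ge_1:
  assumes "weight_pos w" "Delta2 w"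
  obtains E where "E \<ge> 1" "\<And>r. r > 0 \<Longrightarrow> Wfun w (2 * r) \<le> E * Wfun w r"
proof -
  obtain C where C: "\<And>r. r > 0 \<Longrightarrow> Wfun w (2 * r) \<le> C * Wfun w r"
    using assms(2) unfolding Delta2_def by blast
  show thesis
  proof (rule that[of "max C 1"])
    fix r :: real
    assume "r > 0"
    have "C * Wfun w r \<le> max C 1 * Wfun w r"
      using Wfun_nonneg[OF assms(1)] by (intro mult_right_mono) auto
    with C[OF \<open>r > 0\<close>] show "Wfun w (2 * r) \<le> max C 1 * Wfun w r"
      by linarith
  qed simp
qed

lemma Wfun_power2_le:
  assumes "E \<ge> 0" "\<And>r. r > 0 \<Longrightarrow> Wfun w (2 * r) \<le> E * Wfun w r" "r > 0"
  shows "Wfun w (2 ^ m * r) \<le> E ^ m * Wfun w r"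
proof (induction m)
  case 0
  show ?case by simp
next
  case (Suc m)
  have "Wfun w (2 ^ Suc m * r) = Wfun w (2 * (2 ^ m * r))"
    by (simp add: mult.assoc)
  also have "\<dots> \<le> E * Wfun w (2 ^ m * r)"
    using assms(2,3) by simp
  also have "\<dots> \<le> E * (E ^ m * Wfun w r)"
    using Suc assms(1) by (simp add: mult_left_mono)
  finally show ?case by simp
qed

lemma Delta2_Wfun_scale:
  assumes "weight_pos w" "Delta2 w"
  obtains K where "K > 0" "\<And>s t. 0 \<le> s \<Longrightarrow> 0 \<le> t \<Longrightarrow> s \<le> c * t \<Longrightarrow> Wfun w s \<le> K * Wfun w t"
proof -
  obtain E where "E \<ge> 1" and E: "\<And>r. r > 0 \<Longrightarrow> Wfun w (2 * r) \<le> E * Wfun w r"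
    using Delta2_ge_1[OF assms] by blast
  obtain m where "c < 2 ^ m" using real_arch_pow[of 2 c] by auto
  have "Wfun w s \<le> E ^ m * Wfun w t" if "0 \<le> s" "0 \<le> t" "s \<le> c * t" for s t
  proof (cases "t = 0")
    case True
    then show ?thesis using that by simp
  next
    case False
    have "c * t \<le> 2 ^ m * t"
      using \<open>c < 2 ^ m\<close> that(2) by (intro mult_right_mono) auto
    then have "Wfun w s \<le> Wfun w (2 ^ m * t)"
      using that by (intro Wfun_mono[OF assms(1)]) auto
    also have "\<dots> \<le> E ^ m * Wfun w t"
      using Wfun_power2_le[OF _ E] \<open>E \<ge> 1\<close> False that(2) by simp
    finally show ?thesis .
  qed
  moreover have "E ^ m > 0" using \<open>E \<ge> 1\<close> by simp
  ultimately show thesis using that by blast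
qed

theorem lemma3p7:
  fixes p :: real and u w :: "real \<Rightarrow> real"
  assumes "p > 0" and "weight_R u" and "doubling u"
    and "weight_pos w" and "Delta2 w"
  shows "\<exists>C'>0. \<forall>(S :: nat set) (I :: nat \<Rightarrow> real \<times> real) (j :: nat \<Rightarrow> int).
      (\<forall>i\<in>S. fst (I i) < snd (I i)) \<and> well_separated S I \<and> (\<forall>i\<in>S. -50 \<le> j i \<and> j i \<le> 50) \<longrightarrow>
        (1 / C') * Wfun w (umeas u (\<Union>i\<in>S. ivl (shift_ivl (I i) (j i)))) powr (1 / p)
          \<le> Wfun w (umeas u (\<Union>i\<in>S. ivl (I i))) powr (1 / p)
      \<and> Wfun w (umeas u (\<Union>i\<in>S. ivl (I i))) powr (1 / p)
          \<le> C' * Wfun w (umeas u (\<Union>i\<in>S. ivl (shift_ivl (I i) (j i)))) powr (1 / p)"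
proof -
  obtain c where c: "\<And>(S :: nat set) I j. \<forall>i\<in>S. fst (I i) < snd (I i) \<Longrightarrow> well_separated S I \<Longrightarrow>
      \<forall>i\<in>S. \<bar>j i\<bar> \<le> 50 \<Longrightarrow>
      umeas u (\<Union>i\<in>S. ivl (shift_ivl (I i) (j i))) \<le> c * umeas u (\<Union>i\<in>S. ivl (I i)) \<and>
      umeas u (\<Union>i\<in>S. ivl (I i)) \<le> c * umeas u (\<Union>i\<in>S. ivl (shift_ivl (I i) (j i)))"
    using umeas_UN_shift_comparable[OF assms(2,3)] by blast
  obtain K where "K > 0" and K: "\<And>s t. 0 \<le> s \<Longrightarrow> 0 \<le> t \<Longrightarrow> s \<le> c * t \<Longrightarrow>
      Wfun w s \<le> K * Wfun w t"
    using Delta2_Wfun_scale[OF assms(4,5)] by blast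
  have root: "Wfun w (umeas u A) powr (1 / p) \<le> K powr (1 / p) * Wfun w (umeas u B) powr (1 / p)"
    if "umeas u A \<le> c * umeas u B" for A B
  proof -
    have "Wfun w (umeas u A) powr (1 / p) \<le> (K * Wfun w (umeas u B)) powr (1 / p)"
      using K[OF umeas_nonneg umeas_nonneg that] assms(1,2) Wfun_nonneg[OF assms(4)]
      by (intro powr_mono2) auto
    then show ?thesis
      using \<open>K > 0\<close> Wfun_nonneg[OF assms(4)] by (simp add: powr_mult)
  qed
  show ?thesis
  proof (intro exI[of _ "K powr (1 / p)"] conjI allI impI)
    fix S I and j :: "nat \<Rightarrow> int"
    assume "(\<forall>i\<in>S. fst (I i) < snd (I i)) \<and> well_separated S I \<and> (\<forall>i\<in>S. -50 \<le> j i \<and> j i \<le> 50)"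
    then have "\<forall>i\<in>S. fst (I i) < snd (I i)" "well_separated S I" "\<forall>i\<in>S. \<bar>j i\<bar> \<le> 50"
      by auto
    from c[OF this] show "1 / K powr (1 / p) * Wfun w (umeas u (\<Union>i\<in>S. ivl (shift_ivl (I i) (j i)))) powr (1 / p)
        \<le> Wfun w (umeas u (\<Union>i\<in>S. ivl (I i))) powr (1 / p)"
      and "Wfun w (umeas u (\<Union>i\<in>S. ivl (I i))) powr (1 / p)
        \<le> K powr (1 / p) * Wfun w (umeas u (\<Union>i\<in>S. ivl (shift_ivl (I i) (j i)))) powr (1 / p)"
      using root \<open>K > 0\<close> by (auto simp: divide_le_eq mult.commute)
  qed (use \<open>K > 0\<close> in simp)
qed

end
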